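(* For every $k\ge 1$ and every collection $\Omega$ of functions, $$\rho_1\bigl(\mathsf{vwl}_k^{(\infty)}\bigr)=\rho_1\bigl(\mathsf{TL}_{k+1}(\Omega)\bigr).$$
   Context: Fix integers $n\ge 1$ and $\ell\ge 1$. A graph is a triple $G=(V_G,E_G,\mathrm{col}_G)$ with $V_G=[n]=\{1,\dots,n\}$, $E_G$ a set of unordered pairs of distinct vertices (undirected, no loops), and a vertex labelling $\mathrm{col}_G:V_G\to\mathbb R^\ell$; $N_G(v)=\{u:uv\in E_G\}$. Let $\mathcal G=\mathcal G_0$ be the set of all such graphs and, for $s\ge 1$, $\mathcal G_s=\{(G,\mathbf v):G\in\mathcal G,\ \mathbf v\in V_G^s\}$. Tensor language $\mathsf{TL}(\Omega)$: let $\Omega$ be a collection of functions, each of the form $f:\mathbb R^p\to\mathbb R$ for some $p\ge1$ depending on $f$. Expressions are generated by $\varphi::=\mathbf 1_{x=y}\mid \mathbf 1_{x\neq y}\mid E(x,y)\mid P_s(x)\mid \varphi\cdot\varphi\mid \varphi+\varphi\mid a\cdot\varphi\mid f(\varphi_1,\dots,\varphi_p)\mid \sum_x\varphi$, with $x,y$ index variables, $s\in[\ell]$, $a\in\mathbb R$, $f\in\Omega$ of arity $p$. Free variables: $\mathrm{free}(\mathbf 1_{x\,\mathrm{op}\,y})=\mathrm{free}(E(x,y))=\{x,y\}$, $\mathrm{free}(P_s(x))=\{x\}$; for $\varphi_1\cdot\varphi_2$, $\varphi_1+\varphi_2$, $f(\varphi_1,\dots,\varphi_p)$ the union of the components' free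 variables; $\mathrm{free}(a\cdot\varphi)=\mathrm{free}(\varphi)$; $\mathrm{free}(\sum_x\varphi)=\mathrm{free}(\varphi)\setminus\{x\}$. Semantics: for a graph $G$ and a valuation $\nu$ mapping variables to $V_G$: $[\![E(x,y)]\!]^\nu_G=1$ if $\nu(x)\nu(y)\in E_G$ and $0$ otherwise; $[\![P_s(x)]\!]^\nu_G=\mathrm{col}_G(\nu(x))_s$; $[\![\mathbf 1_{x\,\mathrm{op}\,y}]\!]^\nu_G=1$ if $\nu(x)\,\mathrm{op}\,\nu(y)$ and $0$ otherwise; $\cdot$, $+$, scalar multiplication and $f$ act on the values of the components; $[\![\sum_x\varphi]\!]^\nu_G=\sum_{v\in V_G}[\![\varphi]\!]^{\nu[x\mapsto v]}_G$. For $\varphi$ with free variables among $x_1,\dots,x_s$ and $\mathbf v\in V_G^s$, $[\![\varphi]\!]^{\mathbf v}_G$ denotes the value under $x_i\mapsto v_i$. Summation depth $\mathrm{sd}$: $0$ for atoms, maximum over the components for $\cdot$, $+$, $f(\dots)$, $\mathrm{sd}(a\cdot\varphi)=\mathrm{sd}(\varphi)$, $\mathrm{sd}(\sum_x\varphi)=\mathrm{sd}(\varphi)+1$. $\mathsf{TL}_k(\Omega)$ is the set of expressions in which only variables from $\{x_1,\dots,x_k\}$ occur (free or bound; variables may be re-bound), and $\mathsf{TL}_k^{(t)}(\Omega)$ its subset of summation depth at most $t$. Separation power: for a set $\mathcal F$ of functions $f:\mathcal G_s\to\mathbb R^{m_f}$, $\rho_s(\mathcal F)=\{((G,\mathbf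 v),(H,\mathbf w))\in\mathcal G_s\times\mathcal G_s: f(G,\mathbf v)=f(H,\mathbf w)\ \forall f\in\mathcal F\}$ (for $s=0$, pairs of graphs), and $\rho_s(f)=\rho_s(\{f\})$. For a set $\mathcal L$ of expressions, $\rho_s(\mathcal L)$ is the set of pairs with $[\![\varphi]\!]^{\mathbf v}_G=[\![\varphi]\!]^{\mathbf w}_H$ for all $\varphi\in\mathcal L$ whose free variables are among $x_1,\dots,x_s$ (for $s=0$: all closed expressions in $\mathcal L$). $k$-dimensional Weisfeiler–Leman ($k\ge1$): for $\mathbf v\in V_G^k$, the atomic type $\mathsf{atp}_k(G,\mathbf v)$ records, for all $1\le i<j\le k$, whether $v_i=v_j$ and whether $v_iv_j\in E_G$, together with $\mathrm{col}_G(v_i)$ for all $i\in[k]$. Set $\mathsf{wl}_k^{(0)}(G,\mathbf v)=\mathsf{atp}_k(G,\mathbf v)$ and $\mathsf{wl}_k^{(t+1)}(G,\mathbf v)=\bigl(\mathsf{wl}_k^{(t)}(G,\mathbf v),\{\!\{(\mathsf{atp}_{k+1}(G,(v_1,\dots,v_k,u)),\mathsf{wl}_k^{(t)}(G,\mathbf v[u/1]),\dots,\mathsf{wl}_k^{(t)}(G,\mathbf v[u/k])):u\in V_G\}\!\}\bigr)$, where $\mathbf v[u/i]$ replaces the $i$-th entry of $\mathbf v$ by $u$ and $\{\!\{\cdot\}\!\}$ denotes a multiset. Labels are compared as formal objects across graphs. $\mathsf{vwl}_k^{(t)}(G,v)=\mathsf{wl}_k^{(t)}(G,(v,\dots,v))$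 and $\mathsf{gwl}_k^{(t)}(G)=\{\!\{\mathsf{wl}_k^{(t)}(G,\mathbf v):\mathbf v\in V_G^k\}\!\}$. $\rho_1(\mathsf{vwl}_k^{(t)})$ is the set of pairs $((G,v),(H,w))$ with $\mathsf{vwl}_k^{(t)}(G,v)=\mathsf{vwl}_k^{(t)}(H,w)$, and $\rho_1(\mathsf{vwl}_k^{(\infty)})=\bigcap_{t\ge0}\rho_1(\mathsf{vwl}_k^{(t)})$ (the stable labelling). *)

theory Defs
  imports Complex_Main "HOL-Library.Multiset"
begin

text \<open>Values outside the intended domains are
  fixed canonically (False / 0), so that every mathematical graph has exactly one
  representation.\<close>

record graph =
  gE   :: "nat \<Rightarrow> nat \<Rightarrow> bool"
  gcol :: "nat \<Rightarrow> nat \<Rightarrow> real"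

definition is_graph :: "nat \<Rightarrow> nat \<Rightarrow> graph \<Rightarrow> bool" where
  "is_graph n l G \<longleftrightarrow>
     (\<forall>u v. gE G u v \<longrightarrow> u \<in> {1..n} \<and> v \<in> {1..n} \<and> u \<noteq> v \<and> gE G v u) \<and>
     (\<forall>v s. gcol G v s \<noteq> 0 \<longrightarrow> v \<in> {1..n} \<and> s \<in> {1..l})"

text \<open>Index variables x_i are represented by natural numbers i. A function symbol is
  a pair (p, f) with f applied to a real list of length p (i.e. f : R^p \<rightarrow> R).\<close>

datatype tl =
    EqI nat nat
  | NeqI nat nat
  | Edge nat nat
  | Lab nat nat          (* Lab s x  =  P_s(x) *)
  | Mul tl tl
  | Add tl tl
  | Smul real tl
  | App "nat \<times> (real list \<Rightarrow> real)" "tl list"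
  | Sum nat tl

fun free :: "tl \<Rightarrow> nat set" where
  "free (EqI x y) = {x, y}"
| "free (NeqI x y) = {x, y}"
| "free (Edge x y) = {x, y}"
| "free (Lab s x) = {x}"
| "free (Mul a b) = free a \<union> free b"
| "free (Add a b) = free a \<union> free b"
| "free (Smul c a) = free a"
| "free (App f as) = (\<Union>a\<in>set as. free a)"
| "free (Sum x a) = free a - {x}"

fun vars :: "tl \<Rightarrow> nat set" where
  "vars (EqI x y) = {x, y}"
| "vars (NeqI x y) = {x, y}"
| "vars (Edge x y) = {x, y}"
| "vars (Lab s x) = {x}"
| "vars (Mul a b) = vars a \<union> vars b"
| "vars (Add a b) = vars a \<union> vars b"
| "vars (Smul c a) = vars a"
| "vars (App f as) = (\<Union>a\<in>set as. vars a)"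
| "vars (Sum x a) = insert x (vars a)"

fun wf_tl :: "nat \<Rightarrow> (nat \<times> (real list \<Rightarrow> real)) set \<Rightarrow> tl \<Rightarrow> bool" where
  "wf_tl l \<Omega> (EqI x y) = True"
| "wf_tl l \<Omega> (NeqI x y) = True"
| "wf_tl l \<Omega> (Edge x y) = True"
| "wf_tl l \<Omega> (Lab s x) = (s \<in> {1..l})"
| "wf_tl l \<Omega> (Mul a b) = (wf_tl l \<Omega> a \<and> wf_tl l \<Omega> b)"
| "wf_tl l \<Omega> (Add a b) = (wf_tl l \<Omega> a \<and> wf_tl l \<Omega> b)"
| "wf_tl l \<Omega> (Smul c a) = wf_tl l \<Omega> a"
| "wf_tl l \<Omega> (App f as) = (f \<in> \<Omega> \<and> fst f = length as \<and> (\<forall>a\<in>set as. wf_tl l \<Omega> a))"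
| "wf_tl l \<Omega> (Sum x a) = wf_tl l \<Omega> a"

fun eval :: "nat \<Rightarrow> graph \<Rightarrow> (nat \<Rightarrow> nat) \<Rightarrow> tl \<Rightarrow> real" where
  "eval n G \<nu> (EqI x y) = (if \<nu> x = \<nu> y then 1 else 0)"
| "eval n G \<nu> (NeqI x y) = (if \<nu> x \<noteq> \<nu> y then 1 else 0)"
| "eval n G \<nu> (Edge x y) = (if gE G (\<nu> x) (\<nu> y) then 1 else 0)"
| "eval n G \<nu> (Lab s x) = gcol G (\<nu> x) s"
| "eval n G \<nu> (Mul a b) = eval n G \<nu> a * eval n G \<nu> b"
| "eval n G \<nu> (Add a b) = eval n G \<nu> a + eval n G \<nu> b"
| "eval n G \<nu> (Smul c a) = c * eval n G \<nu> a"
| "eval n G \<nu> (App f as) = snd f (map (eval n G \<nu>) as)"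
| "eval n G \<nu> (Sum x a) = (\<Sum>v\<in>{1..n}. eval n G (\<nu>(x := v)) a)"

definition TL :: "nat \<Rightarrow> (nat \<times> (real list \<Rightarrow> real)) set \<Rightarrow> nat \<Rightarrow> tl set" where
  "TL l \<Omega> k = {\<phi>. wf_tl l \<Omega> \<phi> \<and> vars \<phi> \<subseteq> {1..k}}"

text \<open>Variables other than x_1 are not free and
  hence irrelevant; they are mapped to the same vertex.\<close>
definition rho1_TL :: "nat \<Rightarrow> nat \<Rightarrow> tl set \<Rightarrow> ((graph \<times> nat) \<times> (graph \<times> nat)) set" where
  "rho1_TL n l L = {((G, v), (H, w)).
      is_graph n l G \<and> is_graph n l H \<and> v \<in> {1..n} \<and> w \<in> {1..n} \<and>
      (\<forall>\<phi>\<in>L. free \<phi> \<subseteq> {1} \<longrightarrow> eval n G (\<lambda>_. v) \<phi> = eval n H (\<lambda>_. w) \<phi>)}"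

type_synonym atype = "(bool \<times> bool) list \<times> real list list"

definition atp :: "nat \<Rightarrow> graph \<Rightarrow> nat list \<Rightarrow> atype" where
  "atp l G vs =
     ([(vs ! i = vs ! j, gE G (vs ! i) (vs ! j)). i \<leftarrow> [0..<length vs], j \<leftarrow> [Suc i..<length vs]],
      map (\<lambda>v. map (gcol G v) [1..<Suc l]) vs)"

datatype wlab = Atp atype | Refine wlab "(atype \<times> wlab list) multiset"

fun wl :: "nat \<Rightarrow> nat \<Rightarrow> graph \<Rightarrow> nat \<Rightarrow> nat list \<Rightarrow> wlab" where
  "wl n l G 0 vs = Atp (atp l G vs)"
| "wl n l G (Suc t) vs =
     Refine (wl n l G t vs)
       (image_mset (\<lambda>u. (atp l G (vs @ [u]), map (\<lambda>i. wl n l G t (vs[i := u])) [0..<length vs]))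
          (mset_set {1..n}))"

definition vwl :: "nat \<Rightarrow> nat \<Rightarrow> nat \<Rightarrow> nat \<Rightarrow> graph \<Rightarrow> nat \<Rightarrow> wlab" where
  "vwl n l k t G v = wl n l G t (replicate k v)"

definition rho1_vwl_inf :: "nat \<Rightarrow> nat \<Rightarrow> nat \<Rightarrow> ((graph \<times> nat) \<times> (graph \<times> nat)) set" where
  "rho1_vwl_inf n l k = {((G, v), (H, w)).
      is_graph n l G \<and> is_graph n l H \<and> v \<in> {1..n} \<and> w \<in> {1..n} \<and>
      (\<forall>t. vwl n l k t G v = vwl n l k t H w)}"

end

theory Submission
  imports Defs
begin

text \<open>
  \<open>\<subseteq>\<close>: fix an assignment of \<open>x\<^sub>1, \<dots>, x\<^sub>k\<^sub>+\<^sub>1\<close>. The atomic type of the \<open>(k+1)\<close>-tuple of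
  values, together with the round-\<open>t\<close> labels of the \<open>k+1\<close> \<open>k\<close>-tuples obtained by dropping one
  variable, determines the value of every expression of summation depth at most \<open>t\<close>. For
  \<open>\<Sum>\<^sub>x\<^sub>j \<phi>\<close>, the refinement step of the tuple without \<open>x\<^sub>j\<close> matches the summands in the two
  graphs one-to-one; that the labels are invariant under permuting positions absorbs the
  re-indexing this needs.

  \<open>\<supseteq>\<close>: by induction on \<open>t\<close>, every label \<open>c\<close> has an expression in \<open>x\<^sub>1, \<dots>, x\<^sub>k\<^sub>+\<^sub>1\<close> that
  evaluates to \<open>1\<close> on \<open>k\<close>-tuples with label \<open>c\<close> and to \<open>0\<close> on all others, in both graphs. Atomic
  types are tested by products of (in)equality, edge and label tests, and the refinement
  multiset by counting its entries with a sum over \<open>x\<^sub>k\<^sub>+\<^sub>1\<close>. Only finitely many values occur,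
  so comparing with a constant is a Lagrange polynomial and no function from \<open>\<Omega>\<close> is needed.
  Binding \<open>x\<^sub>2, \<dots>, x\<^sub>k\<^sub>+\<^sub>1\<close> to \<open>x\<^sub>1\<close> turns the indicator of the label of \<open>(v, \<dots>, v)\<close> into an
  expression with free variable \<open>x\<^sub>1\<close> only.
\<close>

lemma map_eq_map_iff_nth:
  "map f xs = map g ys \<longleftrightarrow> length xs = length ys \<and> (\<forall>i<length xs. f (xs!i) = g (ys!i))"
  by (auto simp: list_eq_iff_nth_eq)

lemma gE_irrefl: "is_graph n l G \<Longrightarrow> \<not> gE G v v"
  unfolding is_graph_def by blast

lemma gE_sym: "is_graph n l G \<Longrightarrow> gE G u v \<longleftrightarrow> gE G v u"
  by (auto simp: is_graph_def)

lemma gcol_outside: "is_graph n l G \<Longrightarrow> s \<notin> {1..l} \<Longrightarrow> gcol G v s = 0"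
  by (auto simp: is_graph_def)

definition same_atp :: "nat \<Rightarrow> graph \<Rightarrow> nat list \<Rightarrow> graph \<Rightarrow> nat list \<Rightarrow> bool" where
  "same_atp l G vs H ws \<longleftrightarrow> length vs = length ws \<and>
     (\<forall>i<length vs. \<forall>j<length vs. (vs!i = vs!j \<longleftrightarrow> ws!i = ws!j) \<and>
        (gE G (vs!i) (vs!j) \<longleftrightarrow> gE H (ws!i) (ws!j))) \<and>
     (\<forall>i<length vs. \<forall>s\<in>{1..l}. gcol G (vs!i) s = gcol H (ws!i) s)"

lemma fst_atp:
  "fst (atp l G vs) = map (\<lambda>(i, j). (vs!i = vs!j, gE G (vs!i) (vs!j)))
     [(i, j). i \<leftarrow> [0..<length vs], j \<leftarrow> [Suc i..<length vs]]"
  by (simp add: atp_def map_concat comp_def)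

lemma set_upper_pairs: "set [(i, j). i \<leftarrow> [0..<m], j \<leftarrow> [Suc i..<m]] = {(i, j). i < j \<and> j < m}"
  by (auto simp: image_iff)

lemma atp_eq_iff:
  assumes G: "is_graph n l G" and H: "is_graph n l H"
  shows "atp l G vs = atp l H ws \<longleftrightarrow> same_atp l G vs H ws"
proof -
  define P where "P i j \<longleftrightarrow> (vs!i = vs!j \<longleftrightarrow> ws!i = ws!j) \<and> (gE G (vs!i) (vs!j) \<longleftrightarrow> gE H (ws!i) (ws!j))"
    for i j
  define L where "L \<longleftrightarrow> (\<forall>i<length vs. \<forall>s\<in>{1..l}. gcol G (vs!i) s = gcol H (ws!i) s)"
  have P_refl: "P i i" for i
    using gE_irrefl[OF G] gE_irrefl[OF H] by (simp add: P_def)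
  have P_sym: "P i j \<Longrightarrow> P j i" for i j
    unfolding P_def by (metis gE_sym[OF G] gE_sym[OF H])
  have P_upper: "(\<forall>i<m. \<forall>j<m. i < j \<longrightarrow> P i j) \<longleftrightarrow> (\<forall>i<m. \<forall>j<m. P i j)" for m
  proof (intro iffI allI impI)
    fix i j assume "\<forall>i<m. \<forall>j<m. i < j \<longrightarrow> P i j" "i < m" "j < m"
    then show "P i j" using P_refl P_sym by (cases i j rule: linorder_cases) auto
  qed simp
  have labels: "snd (atp l G vs) = snd (atp l H ws) \<longleftrightarrow> length vs = length ws \<and> L"
  proof -
    have "map (gcol G v) [1..<Suc l] = map (gcol H w) [1..<Suc l] \<longleftrightarrow> (\<forall>s\<in>{1..l}. gcol G v s = gcol H w s)"
      for v w by (auto simp del: upt_Suc)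
    then show ?thesis
      unfolding atp_def snd_conv map_eq_map_iff_nth[of "\<lambda>v. map (gcol G v) [1..<Suc l]"] L_def by simp
  qed
  have pairs: "fst (atp l G vs) = fst (atp l H ws) \<longleftrightarrow> (\<forall>i<length vs. \<forall>j<length vs. i < j \<longrightarrow> P i j)"
    if "length vs = length ws"
    unfolding fst_atp that map_eq_conv set_upper_pairs by (auto simp: P_def)
  have "atp l G vs = atp l H ws \<longleftrightarrow> fst (atp l G vs) = fst (atp l H ws) \<and> snd (atp l G vs) = snd (atp l H ws)"
    by (rule prod_eq_iff)
  also have "\<dots> \<longleftrightarrow> length vs = length ws \<and> (\<forall>i<length vs. \<forall>j<length vs. P i j) \<and> L"
    using labels pairs P_upper by blast
  also have "\<dots> \<longleftrightarrow> same_atp l G vs H ws"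
    unfolding same_atp_def P_def L_def ..
  finally show ?thesis .
qed

lemma same_atp_reindex:
  assumes "same_atp l G vs H ws" and "length vs' = length ws'"
    and "\<And>q. q < length vs' \<Longrightarrow> \<sigma> q < length vs \<and> vs'!q = vs!\<sigma> q \<and> ws'!q = ws!\<sigma> q"
  shows "same_atp l G vs' H ws'"
proof -
  have \<sigma>: "\<sigma> q < length vs" "vs'!q = vs!\<sigma> q" "ws'!q = ws!\<sigma> q" if "q < length vs'" for q
    using assms(3) that by auto
  have "(vs'!i = vs'!j \<longleftrightarrow> ws'!i = ws'!j) \<and> (gE G (vs'!i) (vs'!j) \<longleftrightarrow> gE H (ws'!i) (ws'!j))"
    if "i < length vs'" "j < length vs'" for i j
    using assms(1) \<sigma>[OF that(1)] \<sigma>[OF that(2)] unfolding same_atp_def by simp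
  moreover have "gcol G (vs'!i) s = gcol H (ws'!i) s" if "i < length vs'" "s \<in> {1..l}" for i s
    using assms(1) \<sigma>[OF that(1)] that(2) unfolding same_atp_def by simp
  ultimately show ?thesis
    using assms(2) unfolding same_atp_def by blast
qed

lemma atp_reindex:
  assumes "is_graph n l G" and "is_graph n l H" and "atp l G vs = atp l H ws"
    and "length vs' = length ws'"
    and "\<And>q. q < length vs' \<Longrightarrow> \<sigma> q < length vs \<and> vs'!q = vs!\<sigma> q \<and> ws'!q = ws!\<sigma> q"
  shows "atp l G vs' = atp l H ws'"
  using assms same_atp_reindex[of l G vs H ws vs' ws' \<sigma>] by (simp add: atp_eq_iff)

definition wl_entry :: "nat \<Rightarrow> nat \<Rightarrow> graph \<Rightarrow> nat \<Rightarrow> nat list \<Rightarrow> nat \<Rightarrow> atype \<times> wlab list" where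
  "wl_entry n l G t vs u = (atp l G (vs @ [u]), map (\<lambda>i. wl n l G t (vs[i := u])) [0..<length vs])"

definition wl_entries :: "nat \<Rightarrow> nat \<Rightarrow> graph \<Rightarrow> nat \<Rightarrow> nat list \<Rightarrow> (atype \<times> wlab list) multiset" where
  "wl_entries n l G t vs = image_mset (wl_entry n l G t vs) (mset_set {1..n})"

lemma wl_Suc_entries: "wl n l G (Suc t) vs = Refine (wl n l G t vs) (wl_entries n l G t vs)"
  by (simp add: wl_entries_def wl_entry_def[abs_def])

lemma image_mset_eq_transfer:
  assumes eq: "image_mset f A = image_mset g B"
    and transfer: "\<And>x y. x \<in># A \<Longrightarrow> y \<in># B \<Longrightarrow> f x = g y \<Longrightarrow> f' x = g' y"
  shows "image_mset f' A = image_mset g' B"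
proof -
  define h where "h c = f' (SOME x. x \<in># A \<and> f x = c)" for c
  have h_f: "h (f x) = f' x" if x: "x \<in># A" for x
  proof -
    have "f x \<in># image_mset g B"
      using x unfolding eq[symmetric] by simp
    then obtain y where y: "y \<in># B" "g y = f x"
      by auto
    define x0 where "x0 = (SOME x'. x' \<in># A \<and> f x' = f x)"
    have "x0 \<in># A \<and> f x0 = f x"
      unfolding x0_def by (rule someI[of "\<lambda>x'. x' \<in># A \<and> f x' = f x" x]) (simp add: x)
    then have x0: "x0 \<in># A" "f x0 = g y"
      using y(2) by simp_all
    have "h (f x) = f' x0" by (simp add: h_def x0_def)
    also have "\<dots> = g' y" using transfer[OF x0(1) y(1) x0(2)] by simp
    also have "\<dots> = f' x" using transfer[OF x y(1) y(2)[symmetric]] by simp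
    finally show ?thesis .
  qed
  have h_g: "h (g y) = g' y" if y: "y \<in># B" for y
  proof -
    have "g y \<in># image_mset f A"
      using y unfolding eq by simp
    then obtain x where x: "x \<in># A" "f x = g y"
      by auto
    then show ?thesis using h_f[OF x(1)] transfer[OF x(1) y x(2)] by simp
  qed
  have "image_mset f' A = image_mset h (image_mset f A)"
    using h_f by (auto simp: image_mset.compositionality intro!: image_mset_cong)
  also have "\<dots> = image_mset h (image_mset g B)" using eq by simp
  also have "\<dots> = image_mset g' B"
    using h_g by (auto simp: image_mset.compositionality intro!: image_mset_cong)
  finally show ?thesis .
qed

lemma wl_permute:
  assumes G: "is_graph n l G" and H: "is_graph n l H"
    and "wl n l G t vs = wl n l H t ws"
    and "length vs = m" "length ws = m" "length vs' = m" "length ws' = m"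
    and \<tau>_inj: "inj_on \<tau> {..<m}" and \<tau>_range: "\<And>q. q < m \<Longrightarrow> \<tau> q < m"
    and "\<And>q. q < m \<Longrightarrow> vs'!q = vs!\<tau> q \<and> ws'!q = ws!\<tau> q"
  shows "wl n l G t vs' = wl n l H t ws'"
  using assms(3-7,10)
proof (induction t arbitrary: vs ws vs' ws')
  case 0
  then show ?case
    using atp_reindex[OF G H, of vs ws vs' ws' \<tau>] \<tau>_range by simp
next
  case (Suc t)
  have entries: "image_mset (wl_entry n l G t vs) (mset_set {1..n}) =
      image_mset (wl_entry n l H t ws) (mset_set {1..n})"
    and prev: "wl n l G t vs = wl n l H t ws"
    using Suc.prems(1) unfolding wl_Suc_entries wl_entries_def by simp_all
  have "wl_entry n l G t vs' u = wl_entry n l H t ws' u'"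
    if e: "wl_entry n l G t vs u = wl_entry n l H t ws u'" for u u'
  proof -
    have atp_u: "atp l G (vs @ [u]) = atp l H (ws @ [u'])"
      and wl_u: "\<forall>i\<in>set [0..<m]. wl n l G t (vs[i := u]) = wl n l H t (ws[i := u'])"
      using e Suc.prems(2,3) by (simp_all add: wl_entry_def map_eq_conv)
    define \<sigma> where "\<sigma> q = (if q < m then \<tau> q else m)" for q
    have "atp l G (vs' @ [u]) = atp l H (ws' @ [u'])"
    proof (rule atp_reindex[OF G H atp_u, of _ _ \<sigma>])
      show "length (vs' @ [u]) = length (ws' @ [u'])" using Suc.prems(4,5) by simp
      fix q assume "q < length (vs' @ [u])"
      then show "\<sigma> q < length (vs @ [u]) \<and> (vs' @ [u]) ! q = (vs @ [u]) ! \<sigma> q \<and> (ws' @ [u']) ! q = (ws @ [u']) ! \<sigma> q"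
        using Suc.prems(2-6) \<tau>_range[of q] by (cases "q < m") (simp_all add: \<sigma>_def nth_append)
    qed
    moreover have "wl n l G t (vs'[i := u]) = wl n l H t (ws'[i := u'])" if "i < m" for i
    proof (rule Suc.IH)
      show "wl n l G t (vs[\<tau> i := u]) = wl n l H t (ws[\<tau> i := u'])"
        using wl_u \<tau>_range[OF \<open>i < m\<close>] by simp
      fix q assume "q < m"
      have "\<tau> q = \<tau> i \<longleftrightarrow> q = i"
        using \<tau>_inj \<open>q < m\<close> \<open>i < m\<close> by (auto dest: inj_onD)
      then show "vs'[i := u] ! q = vs[\<tau> i := u] ! \<tau> q \<and> ws'[i := u'] ! q = ws[\<tau> i := u'] ! \<tau> q"
        using Suc.prems(2-6) \<open>q < m\<close> \<open>i < m\<close> \<tau>_range[of q] \<tau>_range[of i] by (cases "q = i") simp_all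
    qed (use Suc.prems(2-5) in simp_all)
    ultimately show ?thesis
      using Suc.prems(4,5) by (simp add: wl_entry_def)
  qed
  then have "image_mset (wl_entry n l G t vs') (mset_set {1..n}) =
      image_mset (wl_entry n l H t ws') (mset_set {1..n})"
    by (rule image_mset_eq_transfer[OF entries])
  moreover have "wl n l G t vs' = wl n l H t ws'"
    using Suc.IH[OF prev Suc.prems(2-6)] .
  ultimately show ?case unfolding wl_Suc_entries wl_entries_def by simp
qed

section \<open>Equal labels give equal values\<close>

definition tuple :: "nat \<Rightarrow> (nat \<Rightarrow> nat) \<Rightarrow> nat list" where
  "tuple m \<nu> = map \<nu> [1..<Suc m]"

lemma length_tuple [simp]: "length (tuple m \<nu>) = m"
  by (simp add: tuple_def)

lemma nth_tuple [simp]: "q < m \<Longrightarrow> tuple m \<nu> ! q = \<nu> (Suc q)"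
  by (simp add: tuple_def del: upt_Suc)

lemma tuple_const: "tuple m (\<lambda>_. v) = replicate m v"
  by (simp add: tuple_def map_replicate_const del: upt_Suc)

lemma set_tuple: "set (tuple m \<nu>) = \<nu> ` {1..m}"
  by (simp add: tuple_def atLeastLessThanSuc_atLeastAtMost del: upt_Suc)

text \<open>The values of \<open>x\<^sub>1, \<dots>, x\<^sub>k\<^sub>+\<^sub>1\<close> without \<open>x\<^sub>j\<close>; \<open>x\<^sub>k\<^sub>+\<^sub>1\<close> takes over the slot of \<open>x\<^sub>j\<close>.\<close>

definition omit_var :: "nat \<Rightarrow> (nat \<Rightarrow> nat) \<Rightarrow> nat \<Rightarrow> nat list" where
  "omit_var k \<nu> j = map (\<lambda>i. \<nu> (if i = j then Suc k else i)) [1..<Suc k]"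

lemma length_omit_var [simp]: "length (omit_var k \<nu> j) = k"
  by (simp add: omit_var_def)

lemma nth_omit_var: "q < k \<Longrightarrow> omit_var k \<nu> j ! q = \<nu> (if Suc q = j then Suc k else Suc q)"
  by (simp add: omit_var_def del: upt_Suc)

lemma omit_var_const: "omit_var k (\<lambda>_. v) j = replicate k v"
  by (simp add: omit_var_def map_replicate_const del: upt_Suc)

lemma omit_var_update_same: "j \<in> {1..Suc k} \<Longrightarrow> omit_var k (\<nu>(j := u)) j = omit_var k \<nu> j"
  by (auto simp: omit_var_def intro!: map_cong)

definition wl_agree :: "nat \<Rightarrow> nat \<Rightarrow> nat \<Rightarrow> nat \<Rightarrow> graph \<Rightarrow> (nat \<Rightarrow> nat) \<Rightarrow> graph \<Rightarrow> (nat \<Rightarrow> nat) \<Rightarrow> bool" where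
  "wl_agree n l k t G \<nu> H \<mu> \<longleftrightarrow>
     atp l G (tuple (Suc k) \<nu>) = atp l H (tuple (Suc k) \<mu>) \<and>
     (\<forall>j\<in>{1..Suc k}. wl n l G t (omit_var k \<nu> j) = wl n l H t (omit_var k \<mu> j))"

lemma wl_agree_atoms:
  assumes G: "is_graph n l G" and H: "is_graph n l H" and agree: "wl_agree n l k t G \<nu> H \<mu>"
    and x: "x \<in> {1..Suc k}" and y: "y \<in> {1..Suc k}"
  shows "\<nu> x = \<nu> y \<longleftrightarrow> \<mu> x = \<mu> y" and "gE G (\<nu> x) (\<nu> y) \<longleftrightarrow> gE H (\<mu> x) (\<mu> y)"
    and "gcol G (\<nu> x) s = gcol H (\<mu> x) s"
proof -
  have same: "same_atp l G (tuple (Suc k) \<nu>) H (tuple (Suc k) \<mu>)"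
    using agree atp_eq_iff[OF G H] by (simp add: wl_agree_def)
  have idx: "x - 1 < Suc k" "y - 1 < Suc k" "Suc (x - 1) = x" "Suc (y - 1) = y"
    using x y by auto
  show "\<nu> x = \<nu> y \<longleftrightarrow> \<mu> x = \<mu> y" "gE G (\<nu> x) (\<nu> y) \<longleftrightarrow> gE H (\<mu> x) (\<mu> y)"
    using same idx unfolding same_atp_def by (metis length_tuple nth_tuple)+
  show "gcol G (\<nu> x) s = gcol H (\<mu> x) s"
  proof (cases "s \<in> {1..l}")
    case True
    then show ?thesis using same idx unfolding same_atp_def by (metis length_tuple nth_tuple)
  next
    case False
    then show ?thesis using gcol_outside[OF G] gcol_outside[OF H] by simp
  qed
qed

lemma nth_tuple_update_omit_var:
  assumes "j \<in> {1..Suc k}" and "q < Suc k"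
  shows "tuple (Suc k) (\<nu>(j := u)) ! q =
    (omit_var k \<nu> j @ [u]) ! (if Suc q = j then k else if q = k then j - 1 else q)"
  using assms by (cases "Suc q = j"; cases "q = k") (auto simp: nth_append nth_omit_var)

text \<open>Updating \<open>x\<^sub>j\<close> and then omitting \<open>x\<^sub>i\<close> agrees, up to swapping the slots of
  \<open>x\<^sub>i\<close> and \<open>x\<^sub>j\<close>, with omitting \<open>x\<^sub>j\<close> and then putting the new value into the slot of \<open>x\<^sub>i\<close>.\<close>

lemma nth_omit_var_update_swap:
  assumes "i \<in> {1..Suc k}" and "j \<in> {1..Suc k}" and "i \<noteq> j" and "q < k"
  shows "omit_var k (\<nu>(j := u)) i ! q =
    (omit_var k \<nu> j)[if i = Suc k then j - 1 else i - 1 := u]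
      ! (if i \<le> k \<and> j \<le> k then id(i - 1 := j - 1, j - 1 := i - 1) else id) q"
  using assms by (cases "q = i - 1"; cases "q = j - 1") (auto simp: nth_omit_var nth_list_update)

lemma wl_agree_update:
  assumes G: "is_graph n l G" and H: "is_graph n l H" and j: "j \<in> {1..Suc k}"
    and wl_j: "wl n l G t (omit_var k \<nu> j) = wl n l H t (omit_var k \<mu> j)"
    and entry: "wl_entry n l G t (omit_var k \<nu> j) u = wl_entry n l H t (omit_var k \<mu> j) u'"
  shows "wl_agree n l k t G (\<nu>(j := u)) H (\<mu>(j := u'))"
proof -
  have atp_u: "atp l G (omit_var k \<nu> j @ [u]) = atp l H (omit_var k \<mu> j @ [u'])"
    and wl_u: "\<forall>p\<in>set [0..<k]. wl n l G t ((omit_var k \<nu> j)[p := u]) = wl n l H t ((omit_var k \<mu> j)[p := u'])"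
    using entry by (simp_all add: wl_entry_def map_eq_conv)
  have "atp l G (tuple (Suc k) (\<nu>(j := u))) = atp l H (tuple (Suc k) (\<mu>(j := u')))"
  proof (rule atp_reindex[OF G H atp_u, of _ _ "\<lambda>q. if Suc q = j then k else if q = k then j - 1 else q"])
    fix q assume "q < length (tuple (Suc k) (\<nu>(j := u)))"
    then show "(if Suc q = j then k else if q = k then j - 1 else q) < length (omit_var k \<nu> j @ [u]) \<and>
        tuple (Suc k) (\<nu>(j := u)) ! q = (omit_var k \<nu> j @ [u]) ! (if Suc q = j then k else if q = k then j - 1 else q) \<and>
        tuple (Suc k) (\<mu>(j := u')) ! q = (omit_var k \<mu> j @ [u']) ! (if Suc q = j then k else if q = k then j - 1 else q)"
      using j nth_tuple_update_omit_var[OF j] by auto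
  qed simp
  moreover have "wl n l G t (omit_var k (\<nu>(j := u)) i) = wl n l H t (omit_var k (\<mu>(j := u')) i)"
    if i: "i \<in> {1..Suc k}" for i
  proof (cases "i = j")
    case True
    then show ?thesis using wl_j omit_var_update_same[OF j] by simp
  next
    case False
    define p where "p = (if i = Suc k then j - 1 else i - 1)"
    define \<tau> where "\<tau> = (if i \<le> k \<and> j \<le> k then id(i - 1 := j - 1, j - 1 := i - 1) else id)"
    show ?thesis
    proof (rule wl_permute[OF G H, where m = k and \<tau> = \<tau>])
      show "wl n l G t ((omit_var k \<nu> j)[p := u]) = wl n l H t ((omit_var k \<mu> j)[p := u'])"
        using wl_u i j False by (auto simp: p_def)
      show "inj_on \<tau> {..<k}"
        by (auto simp: \<tau>_def inj_on_def)
      fix q assume "q < k"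
      then show "\<tau> q < k"
        using i j by (auto simp: \<tau>_def)
      show "omit_var k (\<nu>(j := u)) i ! q = (omit_var k \<nu> j)[p := u] ! \<tau> q \<and>
          omit_var k (\<mu>(j := u')) i ! q = (omit_var k \<mu> j)[p := u'] ! \<tau> q"
        unfolding p_def \<tau>_def using nth_omit_var_update_swap[OF i j False \<open>q < k\<close>] by blast
    qed simp_all
  qed
  ultimately show ?thesis
    by (simp add: wl_agree_def)
qed

fun sum_depth :: "tl \<Rightarrow> nat" where
  "sum_depth (Mul a b) = max (sum_depth a) (sum_depth b)"
| "sum_depth (Add a b) = max (sum_depth a) (sum_depth b)"
| "sum_depth (Smul c a) = sum_depth a"
| "sum_depth (App f as) = Max (insert 0 (sum_depth ` set as))"
| "sum_depth (Sum x a) = Suc (sum_depth a)"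
| "sum_depth _ = 0"

lemma sum_depth_App_arg: "a \<in> set as \<Longrightarrow> sum_depth a \<le> sum_depth (App f as)"
  by simp

text \<open>The summands of \<open>\<Sum>\<^sub>x\<^sub>j\<close> are indexed by the entries of the refinement step of the tuple
  without \<open>x\<^sub>j\<close>; equal entries give agreeing assignments, so the two multisets of summands coincide.\<close>

lemma eval_Sum_eq_if_wl_agree:
  assumes G: "is_graph n l G" and H: "is_graph n l H" and x: "x \<in> {1..Suc k}"
    and agree: "wl_agree n l k (Suc t) G \<nu> H \<mu>"
    and IH: "\<And>\<nu> \<mu>. wl_agree n l k t G \<nu> H \<mu> \<Longrightarrow> eval n G \<nu> a = eval n H \<mu> a"
  shows "eval n G \<nu> (Sum x a) = eval n H \<mu> (Sum x a)"
proof -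
  have "wl n l G (Suc t) (omit_var k \<nu> x) = wl n l H (Suc t) (omit_var k \<mu> x)"
    using agree x by (simp add: wl_agree_def)
  then have wl_x: "wl n l G t (omit_var k \<nu> x) = wl n l H t (omit_var k \<mu> x)"
    and entries: "image_mset (wl_entry n l G t (omit_var k \<nu> x)) (mset_set {1..n}) =
      image_mset (wl_entry n l H t (omit_var k \<mu> x)) (mset_set {1..n})"
    unfolding wl_Suc_entries wl_entries_def by simp_all
  have "image_mset (\<lambda>u. eval n G (\<nu>(x := u)) a) (mset_set {1..n}) =
      image_mset (\<lambda>u. eval n H (\<mu>(x := u)) a) (mset_set {1..n})"
  proof (rule image_mset_eq_transfer[OF entries])
    fix u u'
    assume "wl_entry n l G t (omit_var k \<nu> x) u = wl_entry n l H t (omit_var k \<mu> x) u'"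
    then have "wl_agree n l k t G (\<nu>(x := u)) H (\<mu>(x := u'))"
      by (rule wl_agree_update[OF G H x wl_x])
    then show "eval n G (\<nu>(x := u)) a = eval n H (\<mu>(x := u')) a"
      by (rule IH)
  qed
  then show ?thesis
    by (simp add: sum_unfold_sum_mset)
qed

lemma eval_eq_if_wl_agree:
  assumes G: "is_graph n l G" and H: "is_graph n l H"
  shows "vars \<phi> \<subseteq> {1..Suc k} \<Longrightarrow> sum_depth \<phi> \<le> t \<Longrightarrow> wl_agree n l k t G \<nu> H \<mu> \<Longrightarrow>
    eval n G \<nu> \<phi> = eval n H \<mu> \<phi>"
proof (induction \<phi> arbitrary: t \<nu> \<mu>)
  case (EqI x y)
  then show ?case using wl_agree_atoms(1)[OF G H, of k t \<nu> \<mu> x y] by simp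
next
  case (NeqI x y)
  then show ?case using wl_agree_atoms(1)[OF G H, of k t \<nu> \<mu> x y] by simp
next
  case (Edge x y)
  then show ?case using wl_agree_atoms(2)[OF G H, of k t \<nu> \<mu> x y] by simp
next
  case (Lab s x)
  then show ?case using wl_agree_atoms(3)[OF G H, of k t \<nu> \<mu> x x s] by simp
next
  case (Mul a b)
  then show ?case using Mul.IH(1)[of t \<nu> \<mu>] Mul.IH(2)[of t \<nu> \<mu>] by simp
next
  case (Add a b)
  then show ?case using Add.IH(1)[of t \<nu> \<mu>] Add.IH(2)[of t \<nu> \<mu>] by simp
next
  case (Smul c a)
  then show ?case using Smul.IH[of t \<nu> \<mu>] by simp
next
  case (App f as)
  have "eval n G \<nu> a = eval n H \<mu> a" if a: "a \<in> set as" for a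
  proof (rule App.IH[OF a _ _ App.prems(3)])
    show "vars a \<subseteq> {1..Suc k}" using App.prems(1) a by auto
    show "sum_depth a \<le> t" using App.prems(2) sum_depth_App_arg[OF a, of f] by linarith
  qed
  then show ?case by (simp cong: map_cong)
next
  case (Sum x a)
  then obtain t' where t: "t = Suc t'" "sum_depth a \<le> t'" and x: "x \<in> {1..Suc k}"
    by (cases t) auto
  have "vars a \<subseteq> {1..Suc k}"
    using Sum.prems(1) by auto
  then have "eval n G \<nu>' a = eval n H \<mu>' a" if "wl_agree n l k t' G \<nu>' H \<mu>'" for \<nu>' \<mu>'
    using Sum.IH t(2) that by blast
  then show ?case
    using eval_Sum_eq_if_wl_agree[OF G H x] Sum.prems(3) t(1) by blast
qed

lemma wl_eq_le:
  assumes "wl n l G t vs = wl n l H t ws" and "t' \<le> t"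
  shows "wl n l G t' vs = wl n l H t' ws"
  using assms
proof (induction t)
  case (Suc t)
  then show ?case
    by (cases "t' = Suc t") (simp_all add: le_Suc_eq wl_Suc_entries)
qed simp

lemma eval_eq_if_vwl_eq:
  assumes G: "is_graph n l G" and H: "is_graph n l H" and k: "k \<ge> 1"
    and vwl: "vwl n l k t G v = vwl n l k t H w"
    and "vars \<phi> \<subseteq> {1..k + 1}" and "sum_depth \<phi> \<le> t"
  shows "eval n G (\<lambda>_. v) \<phi> = eval n H (\<lambda>_. w) \<phi>"
proof (rule eval_eq_if_wl_agree[OF G H])
  have atp_k: "atp l G (replicate k v) = atp l H (replicate k w)"
    using wl_eq_le[OF vwl[unfolded vwl_def], of 0] by simp
  have "atp l G (replicate (Suc k) v) = atp l H (replicate (Suc k) w)"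
    by (rule atp_reindex[OF G H atp_k, of _ _ "\<lambda>_. 0"]) (use k in \<open>simp_all del: replicate_Suc\<close>)
  with vwl show "wl_agree n l k t G (\<lambda>_. v) H (\<lambda>_. w)"
    by (simp add: wl_agree_def vwl_def tuple_const omit_var_const)
qed (use assms in simp_all)

lemma rho1_vwl_inf_subset_rho1_TL:
  assumes "k \<ge> 1"
  shows "rho1_vwl_inf n l k \<subseteq> rho1_TL n l (TL l \<Omega> (k + 1))"
proof clarify
  fix G v H w
  assume "((G, v), H, w) \<in> rho1_vwl_inf n l k"
  then have G: "is_graph n l G" and H: "is_graph n l H" and "v \<in> {1..n}" "w \<in> {1..n}"
    and vwl: "\<And>t. vwl n l k t G v = vwl n l k t H w"
    by (auto simp: rho1_vwl_inf_def)
  then show "((G, v), H, w) \<in> rho1_TL n l (TL l \<Omega> (k + 1))"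
    using eval_eq_if_vwl_eq[OF G H assms vwl _ order_refl] by (auto simp: rho1_TL_def TL_def)
qed

lemma free_subset_vars: "free \<phi> \<subseteq> vars \<phi>"
  by (induction \<phi>) auto

definition tl_true :: tl where "tl_true = EqI 1 1"
definition tl_false :: tl where "tl_false = NeqI 1 1"

lemma tl_true_simps [simp]:
  "eval n G \<nu> tl_true = 1" "vars tl_true = {1}" "wf_tl l \<Omega> tl_true"
  by (simp_all add: tl_true_def)

lemma tl_false_simps [simp]:
  "eval n G \<nu> tl_false = 0" "vars tl_false = {1}" "wf_tl l \<Omega> tl_false"
  by (simp_all add: tl_false_def)

definition tl_not :: "tl \<Rightarrow> tl" where "tl_not \<psi> = Add tl_true (Smul (-1) \<psi>)"

lemma tl_not_simps [simp]:
  "eval n G \<nu> (tl_not \<psi>) = 1 - eval n G \<nu> \<psi>" "vars (tl_not \<psi>) = insert 1 (vars \<psi>)"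
  "wf_tl l \<Omega> (tl_not \<psi>) = wf_tl l \<Omega> \<psi>"
  by (simp_all add: tl_not_def)

definition tl_prod :: "tl list \<Rightarrow> tl" where "tl_prod \<psi>s = foldr Mul \<psi>s tl_true"

lemma tl_prod_simps [simp]:
  "eval n G \<nu> (tl_prod \<psi>s) = (\<Prod>\<psi>\<leftarrow>\<psi>s. eval n G \<nu> \<psi>)"
  "vars (tl_prod \<psi>s) = insert 1 (\<Union>\<psi>\<in>set \<psi>s. vars \<psi>)"
  "wf_tl l \<Omega> (tl_prod \<psi>s) \<longleftrightarrow> (\<forall>\<psi>\<in>set \<psi>s. wf_tl l \<Omega> \<psi>)"
  by (induction \<psi>s) (auto simp: tl_prod_def)

lemma tl_prod_in_TL:
  "(\<And>\<psi>. \<psi> \<in> set \<psi>s \<Longrightarrow> \<psi> \<in> TL l \<Omega> K) \<Longrightarrow> 1 \<le> K \<Longrightarrow> tl_prod \<psi>s \<in> TL l \<Omega> K"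
  by (auto simp: TL_def)

lemma eval_tl_prod_of_bool:
  assumes "\<And>x. x \<in> set xs \<Longrightarrow> eval n G \<nu> (f x) = of_bool (P x)"
  shows "eval n G \<nu> (tl_prod (map f xs)) = of_bool (\<forall>x\<in>set xs. P x)"
  using assms by (induction xs) auto

text \<open>The Lagrange basis polynomial of \<open>c\<close> on the values \<open>rs\<close> that \<open>\<psi>\<close> can take: it tests
  \<open>\<psi> = c\<close> without any function from \<open>\<Omega>\<close>.\<close>

definition tl_eq_const :: "real list \<Rightarrow> real \<Rightarrow> tl \<Rightarrow> tl" where
  "tl_eq_const rs c \<psi> =
     tl_prod (map (\<lambda>r. Smul (1 / (c - r)) (Add \<psi> (Smul (- r) tl_true))) (filter (\<lambda>r. r \<noteq> c) rs))"

lemma eval_tl_eq_const: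
  assumes "eval n G \<nu> \<psi> \<in> set rs"
  shows "eval n G \<nu> (tl_eq_const rs c \<psi>) = of_bool (eval n G \<nu> \<psi> = c)"
proof (cases "eval n G \<nu> \<psi> = c")
  case True
  have "(\<Prod>r\<leftarrow>filter (\<lambda>r. r \<noteq> c) rs. 1 / (c - r) * (c - r)) = (1::real)"
    by (induction rs) auto
  then show ?thesis
    using True by (simp add: tl_eq_const_def comp_def)
next
  case False
  then have "(0::real) \<in> (\<lambda>r. 1 / (c - r) * (eval n G \<nu> \<psi> - r)) ` set (filter (\<lambda>r. r \<noteq> c) rs)"
    using assms by (auto intro!: image_eqI[where x = "eval n G \<nu> \<psi>"])
  then show ?thesis
    using False by (simp add: tl_eq_const_def comp_def prod_list_zero_iff)
qed

lemma vars_tl_eq_const: "vars (tl_eq_const rs c \<psi>) \<subseteq> insert 1 (vars \<psi>)"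
  by (auto simp: tl_eq_const_def)

lemma wf_tl_eq_const: "wf_tl l \<Omega> \<psi> \<Longrightarrow> wf_tl l \<Omega> (tl_eq_const rs c \<psi>)"
  by (simp add: tl_eq_const_def)

fun rename :: "(nat \<Rightarrow> nat) \<Rightarrow> tl \<Rightarrow> tl" where
  "rename \<pi> (EqI x y) = EqI (\<pi> x) (\<pi> y)"
| "rename \<pi> (NeqI x y) = NeqI (\<pi> x) (\<pi> y)"
| "rename \<pi> (Edge x y) = Edge (\<pi> x) (\<pi> y)"
| "rename \<pi> (Lab s x) = Lab s (\<pi> x)"
| "rename \<pi> (Mul a b) = Mul (rename \<pi> a) (rename \<pi> b)"
| "rename \<pi> (Add a b) = Add (rename \<pi> a) (rename \<pi> b)"
| "rename \<pi> (Smul c a) = Smul c (rename \<pi> a)"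
| "rename \<pi> (App f as) = App f (map (rename \<pi>) as)"
| "rename \<pi> (Sum x a) = Sum (\<pi> x) (rename \<pi> a)"

lemma eval_rename: "inj \<pi> \<Longrightarrow> eval n G \<nu> (rename \<pi> \<phi>) = eval n G (\<nu> \<circ> \<pi>) \<phi>"
proof (induction \<phi> arbitrary: \<nu>)
  case (Sum x a)
  have "eval n G (\<nu>(\<pi> x := u)) (rename \<pi> a) = eval n G ((\<nu> \<circ> \<pi>)(x := u)) a" for u
  proof -
    have "\<nu>(\<pi> x := u) \<circ> \<pi> = (\<nu> \<circ> \<pi>)(x := u)"
      using Sum.prems by (auto simp: fun_eq_iff inj_eq)
    then show ?thesis using Sum.IH[OF Sum.prems, of "\<nu>(\<pi> x := u)"] by metis
  qed
  then show ?case by (simp add: comp_def)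
qed (simp_all cong: map_cong)

lemma vars_rename [simp]: "vars (rename \<pi> \<phi>) = \<pi> ` vars \<phi>"
  by (induction \<phi>) auto

lemma wf_tl_rename [simp]: "wf_tl l \<Omega> (rename \<pi> \<phi>) = wf_tl l \<Omega> \<phi>"
  by (induction \<phi>) auto

definition bind_to_x1 :: "nat list \<Rightarrow> tl \<Rightarrow> tl" where
  "bind_to_x1 xs \<phi> = foldr (\<lambda>x \<psi>. Sum x (Mul (EqI 1 x) \<psi>)) xs \<phi>"

lemma free_bind_to_x1: "free (bind_to_x1 xs \<phi>) \<subseteq> insert 1 (free \<phi> - set xs)"
  by (induction xs) (auto simp: bind_to_x1_def)

lemma vars_bind_to_x1: "vars (bind_to_x1 xs \<phi>) \<subseteq> insert 1 (set xs \<union> vars \<phi>)"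
  by (induction xs) (auto simp: bind_to_x1_def)

lemma wf_tl_bind_to_x1: "wf_tl l \<Omega> (bind_to_x1 xs \<phi>) = wf_tl l \<Omega> \<phi>"
  by (induction xs) (auto simp: bind_to_x1_def)

lemma eval_bind_to_x1:
  assumes "1 \<notin> set xs" and "v \<in> {1..n}"
  shows "eval n G (\<lambda>_. v) (bind_to_x1 xs \<phi>) = eval n G (\<lambda>_. v) \<phi>"
  using assms(1)
proof (induction xs)
  case (Cons x xs)
  have "eval n G (\<lambda>_. v) (bind_to_x1 (x # xs) \<phi>) =
      (\<Sum>u\<in>{1..n}. (if v = u then 1 else 0) * eval n G ((\<lambda>_. v)(x := u)) (bind_to_x1 xs \<phi>))"
    using Cons.prems by (simp add: bind_to_x1_def)
  also have "\<dots> = (\<Sum>u\<in>{1..n}. if v = u then eval n G ((\<lambda>_. v)(x := u)) (bind_to_x1 xs \<phi>) else 0)"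
    by (rule sum.cong) auto
  also have "\<dots> = eval n G ((\<lambda>_. v)(x := v)) (bind_to_x1 xs \<phi>)"
    using assms(2) by (simp add: sum.delta')
  also have "(\<lambda>_. v)(x := v) = (\<lambda>_. v)"
    by auto
  finally show ?case using Cons by simp
qed (simp add: bind_to_x1_def)

section \<open>Expressions testing labels\<close>

definition indicates :: "nat \<Rightarrow> graph set \<Rightarrow> nat \<Rightarrow> (graph \<Rightarrow> nat list \<Rightarrow> bool) \<Rightarrow> tl \<Rightarrow> bool" where
  "indicates n Gs m P \<phi> \<longleftrightarrow>
     (\<forall>Y\<in>Gs. \<forall>\<nu>. \<nu> ` {1..m} \<subseteq> {1..n} \<longrightarrow> eval n Y \<nu> \<phi> = of_bool (P Y (tuple m \<nu>)))"

lemma indicates_tl_false: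
  "(\<And>Y \<nu>. Y \<in> Gs \<Longrightarrow> \<nu> ` {1..m} \<subseteq> {1..n} \<Longrightarrow> \<not> P Y (tuple m \<nu>)) \<Longrightarrow>
    indicates n Gs m P tl_false"
  by (simp add: indicates_def)

lemma tl_false_in_TL: "1 \<le> K \<Longrightarrow> tl_false \<in> TL l \<Omega> K"
  by (simp add: TL_def)

definition same_atp_test :: "nat \<Rightarrow> graph \<Rightarrow> nat list \<Rightarrow> real list \<Rightarrow> tl" where
  "same_atp_test l X xs rs =
     Mul (tl_prod (map (\<lambda>(i, j). if xs!i = xs!j then EqI (Suc i) (Suc j) else NeqI (Suc i) (Suc j))
           (List.product [0..<length xs] [0..<length xs])))
      (Mul (tl_prod (map (\<lambda>(i, j). if gE X (xs!i) (xs!j) then Edge (Suc i) (Suc j)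
                                   else tl_not (Edge (Suc i) (Suc j)))
             (List.product [0..<length xs] [0..<length xs])))
        (tl_prod (map (\<lambda>(i, s). tl_eq_const rs (gcol X (xs!i) s) (Lab s (Suc i)))
           (List.product [0..<length xs] [1..<Suc l]))))"

lemma eval_same_atp_test:
  assumes "\<And>i s. i < length xs \<Longrightarrow> s \<in> {1..l} \<Longrightarrow> gcol Y (\<nu> (Suc i)) s \<in> set rs"
  shows "eval n Y \<nu> (same_atp_test l X xs rs) = of_bool (same_atp l Y (tuple (length xs) \<nu>) X xs)"
proof -
  let ?I = "set (List.product [0..<length xs] [0..<length xs])"
  let ?L = "set (List.product [0..<length xs] [1..<Suc l])"
  have eq: "eval n Y \<nu> (tl_prod (map (\<lambda>(i, j). if xs!i = xs!j then EqI (Suc i) (Suc j) else NeqI (Suc i) (Suc j))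
           (List.product [0..<length xs] [0..<length xs]))) =
      of_bool (\<forall>(i, j)\<in>?I. \<nu> (Suc i) = \<nu> (Suc j) \<longleftrightarrow> xs!i = xs!j)"
    by (rule eval_tl_prod_of_bool) (auto split: if_splits)
  have edge: "eval n Y \<nu> (tl_prod (map (\<lambda>(i, j). if gE X (xs!i) (xs!j) then Edge (Suc i) (Suc j)
                                   else tl_not (Edge (Suc i) (Suc j)))
             (List.product [0..<length xs] [0..<length xs]))) =
      of_bool (\<forall>(i, j)\<in>?I. gE Y (\<nu> (Suc i)) (\<nu> (Suc j)) \<longleftrightarrow> gE X (xs!i) (xs!j))"
    by (rule eval_tl_prod_of_bool) (auto split: if_splits)
  have lab: "eval n Y \<nu> (tl_prod (map (\<lambda>(i, s). tl_eq_const rs (gcol X (xs!i) s) (Lab s (Suc i)))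
           (List.product [0..<length xs] [1..<Suc l]))) =
      of_bool (\<forall>(i, s)\<in>?L. gcol Y (\<nu> (Suc i)) s = gcol X (xs!i) s)"
  proof (rule eval_tl_prod_of_bool, clarify)
    fix i s assume "(i, s) \<in> ?L"
    then have "i < length xs" "s \<in> {1..l}" by auto
    then show "eval n Y \<nu> (tl_eq_const rs (gcol X (xs!i) s) (Lab s (Suc i))) =
        of_bool (gcol Y (\<nu> (Suc i)) s = gcol X (xs!i) s)"
      using assms by (simp add: eval_tl_eq_const)
  qed
  show ?thesis
    unfolding same_atp_test_def eval.simps eq edge lab same_atp_def
    by (auto simp del: upt_Suc)
qed

lemma same_atp_test_in_TL:
  assumes "1 \<le> K" "length xs \<le> K"
  shows "same_atp_test l X xs rs \<in> TL l \<Omega> K"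
proof -
  have lab: "1 \<le> x \<and> x \<le> K" if "x \<in> vars (tl_eq_const rs c (Lab s (Suc i)))" "i < length xs" for c s i x
    using vars_tl_eq_const[of rs c "Lab s (Suc i)"] that assms by auto
  show ?thesis
    using assms by (auto simp: TL_def same_atp_test_def wf_tl_eq_const split: if_splits dest: lab)
qed

lemma finite_label_values:
  assumes "finite Gs"
  obtains rs :: "real list" where "\<And>Y v s. Y \<in> Gs \<Longrightarrow> v \<in> {1..n} \<Longrightarrow> s \<in> {1..l} \<Longrightarrow> gcol Y v s \<in> set rs"
proof -
  have "finite ((\<lambda>(Y, v, s). gcol Y v s) ` (Gs \<times> {1..n} \<times> {1..l}))"
    using assms by simp
  from finite_list[OF this] obtain rs where rs: "set rs = (\<lambda>(Y, v, s). gcol Y v s) ` (Gs \<times> {1..n} \<times> {1..l})" ..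
  show ?thesis
  proof (rule that)
    fix Y v s assume "Y \<in> Gs" "v \<in> {1..n}" "s \<in> {1..l}"
    then have "(Y, v, s) \<in> Gs \<times> {1..n} \<times> {1..l}"
      by simp
    then show "gcol Y v s \<in> set rs"
      unfolding rs by (rule rev_image_eqI) simp
  qed
qed

lemma atp_indicator:
  assumes Gs: "finite Gs" "\<forall>Y\<in>Gs. is_graph n l Y" and K: "1 \<le> K" "m \<le> K"
  shows "\<exists>\<phi>\<in>TL l \<Omega> K. indicates n Gs m (\<lambda>Y vs. atp l Y vs = a) \<phi>"
proof (cases "\<exists>X\<in>Gs. \<exists>xs. length xs = m \<and> atp l X xs = a")
  case True
  then obtain X xs where X: "X \<in> Gs" "length xs = m" "atp l X xs = a"
    by blast
  obtain rs where rs: "\<And>Y v s. Y \<in> Gs \<Longrightarrow> v \<in> {1..n} \<Longrightarrow> s \<in> {1..l} \<Longrightarrow> gcol Y v s \<in> set rs"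
    using finite_label_values[OF Gs(1)] by blast
  have "same_atp_test l X xs rs \<in> TL l \<Omega> K"
    by (rule same_atp_test_in_TL) (use K X(2) in simp_all)
  moreover have "indicates n Gs m (\<lambda>Y vs. atp l Y vs = a) (same_atp_test l X xs rs)"
    unfolding indicates_def
  proof (intro ballI allI impI)
    fix Y \<nu> assume Y: "Y \<in> Gs" and \<nu>: "\<nu> ` {1..m} \<subseteq> {1..n}"
    have "gcol Y (\<nu> (Suc i)) s \<in> set rs" if "i < length xs" "s \<in> {1..l}" for i s
    proof (rule rs[OF Y _ that(2)])
      show "\<nu> (Suc i) \<in> {1..n}"
        using \<nu> that(1) X(2) by (simp add: image_subset_iff)
    qed
    then have "eval n Y \<nu> (same_atp_test l X xs rs) = of_bool (same_atp l Y (tuple m \<nu>) X xs)"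
      unfolding X(2)[symmetric] by (rule eval_same_atp_test)
    also have "same_atp l Y (tuple m \<nu>) X xs \<longleftrightarrow> atp l Y (tuple m \<nu>) = a"
      unfolding X(3)[symmetric] by (rule atp_eq_iff[symmetric]) (use Gs(2) X(1) Y in blast)+
    finally show "eval n Y \<nu> (same_atp_test l X xs rs) = of_bool (atp l Y (tuple m \<nu>) = a)" .
  qed
  ultimately show ?thesis by blast
next
  case False
  have "indicates n Gs m (\<lambda>Y vs. atp l Y vs = a) tl_false"
    by (rule indicates_tl_false) (use False in auto)
  then show ?thesis
    using tl_false_in_TL[OF K(1)] by blast
qed

lemma sum_of_bool_eq_count:
  assumes "finite A"
  shows "(\<Sum>u\<in>A. of_bool (f u = e)) = real (count (image_mset f (mset_set A)) e)"
proof -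
  have "(\<Sum>u\<in>A. of_bool (f u = e)) = sum_mset (image_mset (\<lambda>x. of_bool (x = e)) (image_mset f (mset_set A)))"
    by (simp add: sum_unfold_sum_mset image_mset.compositionality comp_def)
  also have "\<dots> = real (count (image_mset f (mset_set A)) e)"
    by (simp add: of_bool_def sum_mset_delta)
  finally show ?thesis .
qed

lemma tuple_Suc_update: "tuple (Suc k) (\<nu>(Suc k := u)) = tuple k \<nu> @ [u]"
proof (rule nth_equalityI)
  fix q assume "q < length (tuple (Suc k) (\<nu>(Suc k := u)))"
  then show "tuple (Suc k) (\<nu>(Suc k := u)) ! q = (tuple k \<nu> @ [u]) ! q"
    by (cases "q < k") (simp_all add: nth_append)
qed simp

lemma tuple_swap_update:
  assumes "p < k"
  shows "tuple k (\<nu>(Suc k := u) \<circ> id(Suc p := Suc k, Suc k := Suc p)) = (tuple k \<nu>)[p := u]"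
proof (rule nth_equalityI)
  fix q assume "q < length (tuple k (\<nu>(Suc k := u) \<circ> id(Suc p := Suc k, Suc k := Suc p)))"
  then show "tuple k (\<nu>(Suc k := u) \<circ> id(Suc p := Suc k, Suc k := Suc p)) ! q = (tuple k \<nu>)[p := u] ! q"
    using assms by (cases "q = p") simp_all
qed simp

lemma wl_entry_eq_iff:
  assumes "length cs = length vs"
  shows "wl_entry n l Y t vs u = (a, cs) \<longleftrightarrow>
    atp l Y (vs @ [u]) = a \<and> (\<forall>p<length vs. wl n l Y t (vs[p := u]) = cs ! p)"
proof -
  have "map (\<lambda>i. wl n l Y t (vs[i := u])) [0..<length vs] = cs \<longleftrightarrow>
      (\<forall>p<length vs. wl n l Y t (vs[p := u]) = cs ! p)"
    unfolding list_eq_iff_nth_eq using assms by (simp del: wl.simps)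
  then show ?thesis
    by (simp add: wl_entry_def)
qed

text \<open>Swapping \<open>x\<^sub>p\<^sub>+\<^sub>1\<close> with the summation variable \<open>x\<^sub>k\<^sub>+\<^sub>1\<close> makes \<open>\<chi> p\<close> see the tuple
  whose \<open>p\<close>-th entry is replaced by the summation variable, as in \<open>wl_entry\<close>.\<close>

definition count_entries :: "nat \<Rightarrow> tl \<Rightarrow> (nat \<Rightarrow> tl) \<Rightarrow> tl" where
  "count_entries k \<alpha> \<chi> =
     Sum (Suc k) (Mul \<alpha> (tl_prod (map (\<lambda>p. rename (id(Suc p := Suc k, Suc k := Suc p)) (\<chi> p)) [0..<k])))"

lemma count_entries_in_TL:
  assumes "\<alpha> \<in> TL l \<Omega> (Suc k)" and "\<And>p. p < k \<Longrightarrow> \<chi> p \<in> TL l \<Omega> (Suc k)"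
  shows "count_entries k \<alpha> \<chi> \<in> TL l \<Omega> (Suc k)"
proof -
  have "rename (id(Suc p := Suc k, Suc k := Suc p)) (\<chi> p) \<in> TL l \<Omega> (Suc k)" if "p < k" for p
  proof -
    have "vars (\<chi> p) \<subseteq> {1..Suc k}" "wf_tl l \<Omega> (\<chi> p)"
      using assms(2)[OF that] by (simp_all add: TL_def)
    moreover have "id(Suc p := Suc k, Suc k := Suc p) ` {1..Suc k} \<subseteq> {1..Suc k}"
      using that by auto
    ultimately show ?thesis
      by (auto simp: TL_def)
  qed
  then have "tl_prod (map (\<lambda>p. rename (id(Suc p := Suc k, Suc k := Suc p)) (\<chi> p)) [0..<k]) \<in> TL l \<Omega> (Suc k)"
    by - (rule tl_prod_in_TL, auto)
  then show ?thesis
    using assms(1) unfolding count_entries_def TL_def mem_Collect_eq vars.simps wf_tl.simps by auto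
qed

lemma eval_count_entries:
  assumes \<alpha>: "indicates n Gs (Suc k) (\<lambda>Y vs. atp l Y vs = a) \<alpha>"
    and \<chi>: "\<And>p. p < k \<Longrightarrow> indicates n Gs k (\<lambda>Y vs. wl n l Y t vs = cs ! p) (\<chi> p)"
    and cs: "length cs = k" and Y: "Y \<in> Gs" and \<nu>: "\<nu> ` {1..k} \<subseteq> {1..n}"
  shows "eval n Y \<nu> (count_entries k \<alpha> \<chi>) =
    real (count (image_mset (wl_entry n l Y t (tuple k \<nu>)) (mset_set {1..n})) (a, cs))"
proof -
  have "eval n Y (\<nu>(Suc k := u)) (Mul \<alpha> (tl_prod (map (\<lambda>p. rename (id(Suc p := Suc k, Suc k := Suc p)) (\<chi> p)) [0..<k])))
      = of_bool (wl_entry n l Y t (tuple k \<nu>) u = (a, cs))" if u: "u \<in> {1..n}" for u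
  proof -
    let ?swap = "\<lambda>p. id(Suc p := Suc k, Suc k := Suc p)"
    have \<nu>u: "\<nu>(Suc k := u) ` {1..Suc k} \<subseteq> {1..n}"
      using \<nu> u by (auto simp: image_subset_iff)
    have "eval n Y (\<nu>(Suc k := u)) \<alpha> = of_bool (atp l Y (tuple k \<nu> @ [u]) = a)"
      using \<alpha> Y \<nu>u by (simp add: indicates_def tuple_Suc_update)
    moreover have "eval n Y (\<nu>(Suc k := u)) (rename (?swap p) (\<chi> p)) =
        of_bool (wl n l Y t ((tuple k \<nu>)[p := u]) = cs ! p)" if "p < k" for p
    proof -
      have "inj (?swap p)" by (auto simp: inj_def)
      moreover have "(\<nu>(Suc k := u) \<circ> ?swap p) ` {1..k} \<subseteq> {1..n}"
        using \<nu> u \<open>p < k\<close> by (auto simp: image_subset_iff)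
      ultimately show ?thesis
        using \<chi>[OF \<open>p < k\<close>] Y \<open>p < k\<close> by (simp add: indicates_def eval_rename tuple_swap_update)
    qed
    then have "eval n Y (\<nu>(Suc k := u)) (tl_prod (map (\<lambda>p. rename (?swap p) (\<chi> p)) [0..<k])) =
        of_bool (\<forall>p\<in>set [0..<k]. wl n l Y t ((tuple k \<nu>)[p := u]) = cs ! p)"
      by (rule eval_tl_prod_of_bool) simp
    ultimately show ?thesis
      using cs by (auto simp: wl_entry_eq_iff)
  qed
  then have "eval n Y \<nu> (count_entries k \<alpha> \<chi>) = (\<Sum>u\<in>{1..n}. of_bool (wl_entry n l Y t (tuple k \<nu>) u = (a, cs)))"
    by (simp add: count_entries_def)
  also have "\<dots> = real (count (image_mset (wl_entry n l Y t (tuple k \<nu>)) (mset_set {1..n})) (a, cs))"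
    by (rule sum_of_bool_eq_count) simp
  finally show ?thesis .
qed

text \<open>The multiplicities lie in \<open>{0..n}\<close>, so \<open>M = M\<^sub>0\<close> is a product of Lagrange tests.\<close>

definition mset_eq_test :: "nat \<Rightarrow> 'a list \<Rightarrow> ('a \<Rightarrow> tl) \<Rightarrow> 'a multiset \<Rightarrow> tl" where
  "mset_eq_test n es cnt M0 = tl_prod (map (\<lambda>e. tl_eq_const (map real [0..<Suc n]) (real (count M0 e)) (cnt e)) es)"

lemma eval_mset_eq_test:
  assumes "set_mset M \<subseteq> set es" "set_mset M0 \<subseteq> set es" "size M \<le> n"
    and cnt: "\<And>e. e \<in> set es \<Longrightarrow> eval n Y \<nu> (cnt e) = real (count M e)"
  shows "eval n Y \<nu> (mset_eq_test n es cnt M0) = of_bool (M = M0)"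
proof -
  have "eval n Y \<nu> (mset_eq_test n es cnt M0) = of_bool (\<forall>e\<in>set es. count M e = count M0 e)"
    unfolding mset_eq_test_def
  proof (rule eval_tl_prod_of_bool)
    fix e assume e: "e \<in> set es"
    have "count M e \<le> n" using count_le_size[of M e] assms(3) by linarith
    then have "eval n Y \<nu> (cnt e) \<in> set (map real [0..<Suc n])" using cnt[OF e] by auto
    then show "eval n Y \<nu> (tl_eq_const (map real [0..<Suc n]) (real (count M0 e)) (cnt e)) =
        of_bool (count M e = count M0 e)"
      using cnt[OF e] by (simp add: eval_tl_eq_const)
  qed
  also have "(\<forall>e\<in>set es. count M e = count M0 e) \<longleftrightarrow> M = M0"
  proof
    assume "\<forall>e\<in>set es. count M e = count M0 e"
    then show "M = M0"
      using assms(1,2) by (metis count_inI multiset_eqI subsetD)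
  qed simp
  finally show ?thesis by simp
qed

lemma mset_eq_test_in_TL:
  assumes "\<And>e. cnt e \<in> TL l \<Omega> K" and "1 \<le> K"
  shows "mset_eq_test n es cnt M0 \<in> TL l \<Omega> K"
proof -
  have tl_eq_const_in: "tl_eq_const rs c (cnt e) \<in> TL l \<Omega> K" for rs c e
  proof -
    have "vars (tl_eq_const rs c (cnt e)) \<subseteq> {1..K}"
      by (rule order_trans[OF vars_tl_eq_const]) (use assms in \<open>auto simp: TL_def\<close>)
    moreover have "wf_tl l \<Omega> (tl_eq_const rs c (cnt e))"
      using assms(1) by (simp add: TL_def wf_tl_eq_const)
    ultimately show ?thesis by (simp add: TL_def)
  qed
  show ?thesis
    unfolding mset_eq_test_def
  proof (rule tl_prod_in_TL)
    fix \<psi> assume "\<psi> \<in> set (map (\<lambda>e. tl_eq_const (map real [0..<Suc n]) (real (count M0 e)) (cnt e)) es)"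
    then show "\<psi> \<in> TL l \<Omega> K"
      using tl_eq_const_in by auto
  qed (rule assms(2))
qed

text \<open>Restricting to the finitely many graphs \<open>Gs\<close> makes the possible entries a finite set \<open>E\<close>;
  a multiset not supported in \<open>E\<close> never occurs.\<close>

lemma wl_entries_indicator:
  assumes Gs: "finite Gs"
    and \<alpha>: "\<And>a. \<alpha> a \<in> TL l \<Omega> (Suc k)" "\<And>a. indicates n Gs (Suc k) (\<lambda>Y vs. atp l Y vs = a) (\<alpha> a)"
    and \<chi>: "\<And>c. \<chi> c \<in> TL l \<Omega> (Suc k)" "\<And>c. indicates n Gs k (\<lambda>Y vs. wl n l Y t vs = c) (\<chi> c)"
  shows "\<exists>\<phi>\<in>TL l \<Omega> (Suc k). indicates n Gs k (\<lambda>Y vs. wl_entries n l Y t vs = M0) \<phi>"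
proof -
  define E where "E = (\<Union>Y\<in>Gs. \<Union>vs\<in>{vs. set vs \<subseteq> {1..n} \<and> length vs = k}. set_mset (wl_entries n l Y t vs))"
  have "finite E"
    unfolding E_def using Gs finite_lists_length_eq[of "{1..n}" k]
    by (intro finite_UN_I) (simp_all add: wl_entries_def)
  have entries_E: "set_mset (wl_entries n l Y t (tuple k \<nu>)) \<subseteq> E" if "Y \<in> Gs" "\<nu> ` {1..k} \<subseteq> {1..n}" for Y \<nu>
  proof -
    have "tuple k \<nu> \<in> {vs. set vs \<subseteq> {1..n} \<and> length vs = k}"
      using that(2) by (simp add: set_tuple)
    then have "set_mset (wl_entries n l Y t (tuple k \<nu>)) \<subseteq>
        (\<Union>vs\<in>{vs. set vs \<subseteq> {1..n} \<and> length vs = k}. set_mset (wl_entries n l Y t vs))"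
      by (rule UN_upper)
    also have "\<dots> \<subseteq> E"
      unfolding E_def using that(1) by (rule UN_upper)
    finally show ?thesis .
  qed
  show ?thesis
  proof (cases "set_mset M0 \<subseteq> E")
    case False
    have "indicates n Gs k (\<lambda>Y vs. wl_entries n l Y t vs = M0) tl_false"
    proof (rule indicates_tl_false)
      fix Y \<nu> assume "Y \<in> Gs" "\<nu> ` {1..k} \<subseteq> {1..n}"
      then show "wl_entries n l Y t (tuple k \<nu>) \<noteq> M0"
        using False entries_E by blast
    qed
    then show ?thesis
      using tl_false_in_TL[of "Suc k" l \<Omega>] by auto
  next
    case True
    obtain es where es: "set es = E"
      using finite_list[OF \<open>finite E\<close>] by blast
    define cnt where "cnt e = count_entries k (\<alpha> (fst e)) (\<lambda>p. \<chi> (snd e ! p))" for e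
    have "cnt e \<in> TL l \<Omega> (Suc k)" for e
      unfolding cnt_def by (rule count_entries_in_TL) (simp_all add: \<alpha> \<chi>)
    then have "mset_eq_test n es cnt M0 \<in> TL l \<Omega> (Suc k)"
      by (rule mset_eq_test_in_TL) simp
    moreover have "indicates n Gs k (\<lambda>Y vs. wl_entries n l Y t vs = M0) (mset_eq_test n es cnt M0)"
      unfolding indicates_def
    proof (intro ballI allI impI)
      fix Y \<nu> assume Y: "Y \<in> Gs" and \<nu>: "\<nu> ` {1..k} \<subseteq> {1..n}"
      show "eval n Y \<nu> (mset_eq_test n es cnt M0) = of_bool (wl_entries n l Y t (tuple k \<nu>) = M0)"
      proof (rule eval_mset_eq_test)
        show "set_mset (wl_entries n l Y t (tuple k \<nu>)) \<subseteq> set es"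
          using entries_E[OF Y \<nu>] es by simp
        show "set_mset M0 \<subseteq> set es"
          using True es by simp
        show "size (wl_entries n l Y t (tuple k \<nu>)) \<le> n"
          by (simp add: wl_entries_def)
        fix e assume "e \<in> set es"
        moreover obtain a cs where e: "e = (a, cs)"
          by fastforce
        ultimately have "length cs = k"
          using es unfolding E_def wl_entries_def by (auto simp: wl_entry_def)
        then show "eval n Y \<nu> (cnt e) = real (count (wl_entries n l Y t (tuple k \<nu>)) e)"
          unfolding e cnt_def wl_entries_def fst_conv snd_conv
          by (rule eval_count_entries[OF \<alpha>(2) \<chi>(2) _ Y \<nu>])
      qed
    qed
    ultimately show ?thesis by blast
  qed
qed

lemma wl_indicator:
  assumes Gs: "finite Gs" "\<forall>Y\<in>Gs. is_graph n l Y" and k: "k \<ge> 1"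
  shows "\<exists>\<phi>\<in>TL l \<Omega> (Suc k). indicates n Gs k (\<lambda>Y vs. wl n l Y t vs = c) \<phi>"
proof (induction t arbitrary: c)
  case 0
  show ?case
  proof (cases c)
    case (Atp a)
    then show ?thesis
      using atp_indicator[OF Gs, of "Suc k" k \<Omega> a] by simp
  next
    case (Refine c0 M0)
    have "indicates n Gs k (\<lambda>Y vs. wl n l Y 0 vs = c) tl_false"
      by (rule indicates_tl_false) (simp add: Refine)
    then show ?thesis
      using tl_false_in_TL[of "Suc k" l \<Omega>] by auto
  qed
next
  case (Suc t)
  have "\<forall>c. \<exists>\<phi>. \<phi> \<in> TL l \<Omega> (Suc k) \<and> indicates n Gs k (\<lambda>Y vs. wl n l Y t vs = c) \<phi>"
    using Suc.IH by blast
  then have "\<exists>\<chi>. \<forall>c. \<chi> c \<in> TL l \<Omega> (Suc k) \<and> indicates n Gs k (\<lambda>Y vs. wl n l Y t vs = c) (\<chi> c)"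
    by (rule choice)
  then obtain \<chi> where \<chi>: "\<And>c. \<chi> c \<in> TL l \<Omega> (Suc k)" "\<And>c. indicates n Gs k (\<lambda>Y vs. wl n l Y t vs = c) (\<chi> c)"
    by blast
  have "\<forall>a. \<exists>\<phi>. \<phi> \<in> TL l \<Omega> (Suc k) \<and> indicates n Gs (Suc k) (\<lambda>Y vs. atp l Y vs = a) \<phi>"
    using atp_indicator[OF Gs, of "Suc k" "Suc k" \<Omega>] by auto
  then have "\<exists>\<alpha>. \<forall>a. \<alpha> a \<in> TL l \<Omega> (Suc k) \<and> indicates n Gs (Suc k) (\<lambda>Y vs. atp l Y vs = a) (\<alpha> a)"
    by (rule choice)
  then obtain \<alpha> where \<alpha>: "\<And>a. \<alpha> a \<in> TL l \<Omega> (Suc k)" "\<And>a. indicates n Gs (Suc k) (\<lambda>Y vs. atp l Y vs = a) (\<alpha> a)"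
    by blast
  show ?case
  proof (cases c)
    case (Atp a)
    have "indicates n Gs k (\<lambda>Y vs. wl n l Y (Suc t) vs = c) tl_false"
      by (rule indicates_tl_false) (simp add: Atp)
    then show ?thesis
      using tl_false_in_TL[of "Suc k" l \<Omega>] by auto
  next
    case (Refine c0 M0)
    obtain \<psi> where \<psi>: "\<psi> \<in> TL l \<Omega> (Suc k)" "indicates n Gs k (\<lambda>Y vs. wl_entries n l Y t vs = M0) \<psi>"
      using wl_entries_indicator[OF Gs(1) \<alpha> \<chi>] by blast
    have "Mul (\<chi> c0) \<psi> \<in> TL l \<Omega> (Suc k)"
      using \<chi>(1)[of c0] \<psi>(1) by (simp add: TL_def)
    moreover have "indicates n Gs k (\<lambda>Y vs. wl n l Y (Suc t) vs = c) (Mul (\<chi> c0) \<psi>)"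
      using \<chi>(2)[of c0] \<psi>(2) by (simp add: indicates_def Refine wl_Suc_entries del: wl.simps)
    ultimately show ?thesis by blast
  qed
qed

lemma rho1_TL_subset_rho1_vwl_inf:
  assumes k: "k \<ge> 1"
  shows "rho1_TL n l (TL l \<Omega> (k + 1)) \<subseteq> rho1_vwl_inf n l k"
proof clarify
  fix G v H w
  assume "((G, v), H, w) \<in> rho1_TL n l (TL l \<Omega> (k + 1))"
  then have G: "is_graph n l G" and H: "is_graph n l H" and v: "v \<in> {1..n}" and w: "w \<in> {1..n}"
    and agree: "\<And>\<phi>. \<phi> \<in> TL l \<Omega> (k + 1) \<Longrightarrow> free \<phi> \<subseteq> {1} \<Longrightarrow> eval n G (\<lambda>_. v) \<phi> = eval n H (\<lambda>_. w) \<phi>"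
    by (auto simp: rho1_TL_def)
  have "vwl n l k t G v = vwl n l k t H w" for t
  proof -
    obtain \<phi> where \<phi>: "\<phi> \<in> TL l \<Omega> (Suc k)"
      and ind: "indicates n {G, H} k (\<lambda>Y vs. wl n l Y t vs = vwl n l k t G v) \<phi>"
      using wl_indicator[of "{G, H}" n l k] G H k by blast
    define \<psi> where "\<psi> = bind_to_x1 [2..<k + 2] \<phi>"
    have "\<psi> \<in> TL l \<Omega> (k + 1)"
      using \<phi> vars_bind_to_x1[of "[2..<k + 2]" \<phi>] wf_tl_bind_to_x1[of l \<Omega> "[2..<k + 2]" \<phi>]
      by (auto simp: \<psi>_def TL_def simp del: upt_Suc)
    moreover have "free \<psi> \<subseteq> {1}"
    proof -
      have "free \<phi> \<subseteq> {1..k + 1}"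
        using \<phi> free_subset_vars[of \<phi>] by (auto simp: TL_def)
      then have "insert 1 (free \<phi> - set [2..<k + 2]) \<subseteq> {1}"
        by (auto simp del: upt_Suc)
      then show ?thesis
        using free_bind_to_x1[of "[2..<k + 2]" \<phi>] unfolding \<psi>_def by blast
    qed
    moreover have "eval n G (\<lambda>_. v) \<psi> = 1" and "eval n H (\<lambda>_. w) \<psi> = of_bool (vwl n l k t H w = vwl n l k t G v)"
      using ind[unfolded indicates_def, rule_format, of G "\<lambda>_. v"] ind[unfolded indicates_def, rule_format, of H "\<lambda>_. w"] v w
      by (simp_all add: \<psi>_def eval_bind_to_x1 tuple_const vwl_def image_subset_iff del: upt_Suc)
    ultimately show ?thesis
      using agree by fastforce
  qed
  then show "((G, v), H, w) \<in> rho1_vwl_inf n l k"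
    using G H v w by (simp add: rho1_vwl_inf_def)
qed

theorem theorem1:
  fixes n l k :: nat and \<Omega> :: "(nat \<times> (real list \<Rightarrow> real)) set"
  assumes "n \<ge> 1" and "l \<ge> 1" and "k \<ge> 1"
    and "\<forall>f\<in>\<Omega>. fst f \<ge> 1"
  shows "rho1_vwl_inf n l k = rho1_TL n l (TL l \<Omega> (k + 1))"
  using rho1_vwl_inf_subset_rho1_TL[OF assms(3)] rho1_TL_subset_rho1_vwl_inf[OF assms(3)]
  by (rule equalityI)

end
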